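(* Let $N\ge 2$ and $L\ge 2$ be integers. There is no bijection $h:\mathbb{Z}/N^L\mathbb{Z}\to(\mathbb{Z}/N\mathbb{Z})^L$ together with a binary operation $g:\mathbb{Z}/N\mathbb{Z}\times\mathbb{Z}/N\mathbb{Z}\to\mathbb{Z}/N\mathbb{Z}$ such that $h(ab)_i=g(h(a)_i,h(b)_i)$ for all $a,b\in\mathbb{Z}/N^L\mathbb{Z}$ and all $i\in\{1,\ldots,L\}$ (here $ab$ is the product in the ring $\mathbb{Z}/N^L\mathbb{Z}$ and $h(a)_i$ the $i$-th coordinate of $h(a)$). *)

theory Defs
  imports "HOL-Library.FuncSet"
begin

text \<open>Z/mZ is modelled as {0..<m} with multiplication (a*b) mod m.
  (Z/NZ)^L is modelled as the extensional functions {0..<L} -> {0..<N}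
  (coordinate i of the paper corresponds to index i-1).\<close>

end

theory Submission
  imports Defs "HOL-Computational_Algebra.Primes"
begin

text \<open>
  The nilpotent elements of \<open>\<int>/N\<^sup>L\<int>\<close> are the multiples of the radical \<open>rad N\<close>, the product
  of the primes dividing \<open>N\<close>; so there are \<open>N\<^sup>L / rad N\<close> of them. A bijection \<open>h\<close> turning the
  multiplication into a coordinatewise operation \<open>g\<close> maps \<open>0\<close> to a constant tuple \<open>(z, \<dots>, z)\<close>
  with \<open>z\<close> absorbing for \<open>g\<close>, and hence maps the nilpotent elements onto \<open>C\<^sup>L\<close>, where \<open>C\<close> is
  the set of \<open>x\<close> some \<open>g\<close>-power of which is \<open>z\<close>. Thus \<open>|C|\<^sup>L \<cdot> rad N = N\<^sup>L\<close>, and comparing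
  the multiplicities of a prime \<open>p\<close> dividing \<open>N\<close> gives \<open>L \<cdot> v\<^sub>p|C| + 1 = L \<cdot> v\<^sub>p N\<close>, impossible
  for \<open>L \<ge> 2\<close>.
\<close>

lemma multiplicity_prod_prime_factors:
  fixes n q :: nat
  assumes "n \<noteq> 0" "prime q"
  shows "multiplicity q (\<Prod>(prime_factors n)) = (if q dvd n then 1 else 0)"
proof -
  have "multiplicity q (\<Prod>p\<in>prime_factors n. p ^ 1) = (if q \<in> prime_factors n then 1 else 0)"
    using assms(2) by (intro multiplicity_prod_prime_powers) (auto intro: in_prime_factors_imp_prime)
  then show ?thesis using assms by (simp add: in_prime_factors_iff)
qed

lemma prod_prime_factors_dvd:
  fixes n :: nat
  assumes "n \<noteq> 0"
  shows "\<Prod>(prime_factors n) dvd n"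
proof (rule multiplicity_le_imp_dvd)
  show "\<Prod>(prime_factors n) \<noteq> 0" by (simp add: prime_factors_dvd)
next
  fix q :: nat assume "prime q"
  then show "multiplicity q (\<Prod>(prime_factors n)) \<le> multiplicity q n"
    using assms by (simp add: multiplicity_prod_prime_factors Suc_le_eq prime_multiplicity_gt_zero_iff)
qed

lemma multiplicity_less_self:
  fixes n q :: nat
  assumes "0 < n" "prime q"
  shows "multiplicity q n < n"
proof -
  have "multiplicity q n < 2 ^ multiplicity q n" by (rule less_exp)
  also have "\<dots> \<le> q ^ multiplicity q n" using prime_ge_2_nat[OF assms(2)] by (rule power_mono) simp
  also have "\<dots> \<le> n" using assms(1) by (intro dvd_imp_le multiplicity_dvd)
  finally show ?thesis .
qed

lemma dvd_power_iff_prod_prime_factors_dvd: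
  fixes m k a :: nat
  assumes "0 < m" "m \<le> k"
  shows "m dvd a ^ k \<longleftrightarrow> \<Prod>(prime_factors m) dvd a"
proof (cases "a = 0")
  case True
  then show ?thesis using assms by (simp add: power_0_left)
next
  case False
  have multiplicity_iff: "multiplicity q m \<le> multiplicity q (a ^ k) \<longleftrightarrow>
      multiplicity q (\<Prod>(prime_factors m)) \<le> multiplicity q a" if q: "prime q" for q
  proof (cases "q dvd m")
    case True
    have "0 < multiplicity q m" using True assms(1) q by (simp add: prime_multiplicity_gt_zero_iff)
    moreover have "multiplicity q m < k" using multiplicity_less_self[OF assms(1) q] assms(2) by simp
    moreover have "multiplicity q (a ^ k) = k * multiplicity q a"
      using q False by (simp add: prime_elem_multiplicity_power_distrib)
    moreover have "multiplicity q (\<Prod>(prime_factors m)) = 1"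
      using multiplicity_prod_prime_factors[of m q] assms(1) q True by simp
    ultimately show ?thesis by (cases "multiplicity q a") auto
  next
    case False
    then show ?thesis
      using multiplicity_prod_prime_factors[of m q] assms(1) q by (simp add: not_dvd_imp_multiplicity_0)
  qed
  show ?thesis
  proof
    assume divides: "m dvd a ^ k"
    have "\<Prod>(prime_factors m) \<noteq> 0" by (simp add: prime_factors_dvd)
    then show "\<Prod>(prime_factors m) dvd a"
      using multiplicity_iff dvd_imp_multiplicity_le[OF divides] False
      by (intro multiplicity_le_imp_dvd) auto
  next
    assume divides: "\<Prod>(prime_factors m) dvd a"
    show "m dvd a ^ k"
      using multiplicity_iff dvd_imp_multiplicity_le[OF divides False] assms(1)
      by (intro multiplicity_le_imp_dvd) auto
  qed
qed

lemma card_multiples_below: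
  fixes d m :: nat
  assumes "d dvd m" "0 < d"
  shows "card {a \<in> {0..<m}. d dvd a} = m div d"
proof -
  have "{a \<in> {0..<m}. d dvd a} = (\<lambda>j. d * j) ` {0..<m div d}"
    using assms by (auto elim!: dvdE)
  then show ?thesis using assms by (simp add: card_image inj_on_def)
qed

lemma power_mult_neq_power:
  fixes c r n L p :: nat
  assumes "prime p" "\<not> L dvd multiplicity p r" "n \<noteq> 0"
  shows "c ^ L * r \<noteq> n ^ L"
proof
  assume eq: "c ^ L * r = n ^ L"
  show False
  proof (cases "L = 0")
    case True
    then show False using eq assms(2) by simp
  next
    case False
    have "c ^ L * r \<noteq> 0" using eq assms(3) by simp
    then have "c \<noteq> 0" "r \<noteq> 0" using False by (auto simp: power_0_left)
    then have "L * multiplicity p c + multiplicity p r = L * multiplicity p n"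
      using arg_cong[OF eq, of "multiplicity p"] assms
      by (simp add: prime_elem_multiplicity_mult_distrib prime_elem_multiplicity_power_distrib)
    then have "L dvd multiplicity p r" by (metis dvd_add_right_iff dvd_triv_left)
    with assms(2) show False ..
  qed
qed

locale coordinatewise_mult_bij =
  fixes M L N :: nat and h g :: "nat \<Rightarrow> nat \<Rightarrow> nat"
  assumes M_pos: "0 < M"
    and bij: "bij_betw h {0..<M} ({0..<L} \<rightarrow>\<^sub>E {0..<N})"
    and mult: "\<And>a b i. a < M \<Longrightarrow> b < M \<Longrightarrow> i < L \<Longrightarrow> h (a * b mod M) i = g (h a i) (h b i)"
begin

lemma h_coordinate_less:
  assumes "a < M" "i < L"
  shows "h a i < N"
proof -
  have "h a \<in> {0..<L} \<rightarrow>\<^sub>E {0..<N}" using bij_betw_apply[OF bij] assms(1) by simp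
  then show ?thesis using assms(2) by (simp add: PiE_iff)
qed

lemma h_coordinate_surj:
  assumes "x < N" "i < L"
  obtains a where "a < M" "h a i = x"
proof -
  have "(\<lambda>j\<in>{0..<L}. x) \<in> h ` {0..<M}"
    using assms(1) bij_betw_imp_surj_on[OF bij] by simp
  then obtain a where a: "a \<in> {0..<M}" "h a = (\<lambda>j\<in>{0..<L}. x)" by (auto simp del: restrict_apply)
  then have "h a i = x" using assms(2) by simp
  with a(1) that show thesis by simp
qed

lemma h_zero_absorbing:
  assumes "x < N" "i < L"
  shows "g x (h 0 i) = h 0 i" and "g (h 0 i) x = h 0 i"
proof -
  obtain a where "a < M" "h a i = x" using h_coordinate_surj[OF assms] .
  then show "g x (h 0 i) = h 0 i" "g (h 0 i) x = h 0 i"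
    using mult[of a 0 i] mult[of 0 a i] M_pos assms(2) by simp_all
qed

lemma h_zero_const:
  assumes "i < L" "j < L"
  shows "h 0 i = h 0 j"
proof -
  have "h 0 i = g (h 0 j) (h 0 i)"
    using h_zero_absorbing(1)[OF h_coordinate_less[OF M_pos assms(2)] assms(1)] by simp
  also have "\<dots> = h 0 j"
    using h_zero_absorbing(2)[OF h_coordinate_less[OF M_pos assms(1)] assms(2)] .
  finally show ?thesis .
qed

lemma h_power:
  assumes "a < M" "i < L"
  shows "h (a ^ Suc k mod M) i = ((\<lambda>y. g y (h a i)) ^^ k) (h a i)"
proof (induction k)
  case 0
  then show ?case using assms(1) by simp
next
  case (Suc k)
  have "a ^ Suc (Suc k) mod M = (a ^ Suc k mod M) * a mod M"
    by (simp only: power_Suc2 mod_mult_left_eq)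
  also have "h \<dots> i = g (h (a ^ Suc k mod M) i) (h a i)"
    using mult[of "a ^ Suc k mod M" a i] M_pos assms by simp
  finally show ?case using Suc.IH by simp
qed

lemma image_nilpotent:
  "h ` {a \<in> {0..<M}. M dvd a ^ Suc k} = {0..<L} \<rightarrow>\<^sub>E {x \<in> {0..<N}. ((\<lambda>y. g y x) ^^ k) x = h 0 0}"
  (is "h ` ?nil = {0..<L} \<rightarrow>\<^sub>E ?C")
proof
  show "h ` ?nil \<subseteq> {0..<L} \<rightarrow>\<^sub>E ?C"
  proof
    fix f assume "f \<in> h ` ?nil"
    then obtain a where a: "a < M" "a ^ Suc k mod M = 0" "f = h a" by auto
    have "((\<lambda>y. g y (h a i)) ^^ k) (h a i) = h 0 0" if i: "i < L" for i
    proof -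
      have "((\<lambda>y. g y (h a i)) ^^ k) (h a i) = h (a ^ Suc k mod M) i"
        using h_power[OF a(1) i] by (rule sym)
      also have "\<dots> = h 0 i" by (simp only: a(2))
      also have "\<dots> = h 0 0" using h_zero_const[of i 0] i by simp
      finally show ?thesis .
    qed
    with a show "f \<in> {0..<L} \<rightarrow>\<^sub>E ?C"
      using bij_betw_apply[OF bij, of a] h_coordinate_less by (simp add: PiE_iff)
  qed
next
  show "{0..<L} \<rightarrow>\<^sub>E ?C \<subseteq> h ` ?nil"
  proof
    fix f assume f: "f \<in> {0..<L} \<rightarrow>\<^sub>E ?C"
    then have "f \<in> h ` {0..<M}"
      using PiE_mono[of "{0..<L}" "\<lambda>_. ?C" "\<lambda>_. {0..<N}"] bij_betw_imp_surj_on[OF bij] by blast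
    then obtain a where a: "a \<in> {0..<M}" "f = h a" by (rule imageE)
    have "h (a ^ Suc k mod M) = h 0"
    proof (rule PiE_ext)
      show "h (a ^ Suc k mod M) \<in> {0..<L} \<rightarrow>\<^sub>E {0..<N}" "h 0 \<in> {0..<L} \<rightarrow>\<^sub>E {0..<N}"
        using M_pos by (simp_all add: bij_betw_apply[OF bij])
    next
      fix i assume i: "i \<in> {0..<L}"
      then have "((\<lambda>y. g y (h a i)) ^^ k) (h a i) = h 0 0" using f a(2) by (simp add: PiE_iff)
      then show "h (a ^ Suc k mod M) i = h 0 i"
        using h_power[of a i k] h_zero_const[of i 0] a(1) i by simp
    qed
    then have "a ^ Suc k mod M = 0"
      using inj_onD[OF bij_betw_imp_inj_on[OF bij]] M_pos by simp
    with a show "f \<in> h ` ?nil" by (simp add: mod_eq_0_iff_dvd)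
  qed
qed

lemma card_nilpotent:
  "card {a \<in> {0..<M}. M dvd a ^ Suc k} = card {x \<in> {0..<N}. ((\<lambda>y. g y x) ^^ k) x = h 0 0} ^ L"
  (is "card ?nil = card ?C ^ L")
proof -
  have "inj_on h ?nil"
    using bij_betw_imp_inj_on[OF bij] by (rule inj_on_subset) auto
  then have "card ?nil = card (h ` ?nil)" by (simp only: card_image)
  also have "\<dots> = card ({0..<L} \<rightarrow>\<^sub>E ?C)" by (simp only: image_nilpotent)
  also have "\<dots> = card ?C ^ L" by (simp add: card_PiE)
  finally show ?thesis .
qed

lemma card_coordinate_nilpotents:
  "card {x \<in> {0..<N}. ((\<lambda>y. g y x) ^^ M) x = h 0 0} ^ L * \<Prod>(prime_factors M) = M"
proof -
  define r where "r = \<Prod>(prime_factors M)"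
  have r_dvd: "r dvd M" unfolding r_def using M_pos by (intro prod_prime_factors_dvd) simp
  have r_pos: "0 < r"
    unfolding r_def by (intro prod_pos) (auto dest: in_prime_factors_imp_prime prime_gt_0_nat)
  have "card {x \<in> {0..<N}. ((\<lambda>y. g y x) ^^ M) x = h 0 0} ^ L = card {a \<in> {0..<M}. M dvd a ^ Suc M}"
    by (rule card_nilpotent[symmetric])
  also have "\<dots> = card {a \<in> {0..<M}. r dvd a}"
    using dvd_power_iff_prod_prime_factors_dvd[OF M_pos le_SucI[OF order.refl]] by (simp add: r_def)
  also have "\<dots> = M div r" using r_dvd r_pos by (rule card_multiples_below)
  finally show ?thesis using r_dvd by (simp add: r_def [symmetric])
qed

end

theorem mainTheorem16:
  fixes N L :: nat
  assumes "N \<ge> 2" and "L \<ge> 2"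
  shows "\<not> (\<exists>(h :: nat \<Rightarrow> nat \<Rightarrow> nat) (g :: nat \<Rightarrow> nat \<Rightarrow> nat).
            bij_betw h {0..<N ^ L} ({0..<L} \<rightarrow>\<^sub>E {0..<N}) \<and>
            (\<forall>x\<in>{0..<N}. \<forall>y\<in>{0..<N}. g x y \<in> {0..<N}) \<and>
            (\<forall>a\<in>{0..<N ^ L}. \<forall>b\<in>{0..<N ^ L}. \<forall>i\<in>{0..<L}.
                h ((a * b) mod (N ^ L)) i = g (h a i) (h b i)))"
proof
  assume "\<exists>h g. bij_betw h {0..<N ^ L} ({0..<L} \<rightarrow>\<^sub>E {0..<N}) \<and>
            (\<forall>x\<in>{0..<N}. \<forall>y\<in>{0..<N}. g x y \<in> {0..<N}) \<and>
            (\<forall>a\<in>{0..<N ^ L}. \<forall>b\<in>{0..<N ^ L}. \<forall>i\<in>{0..<L}.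
                h ((a * b) mod (N ^ L)) i = g (h a i) (h b i))"
  then obtain h g where
    bij: "bij_betw h {0..<N ^ L} ({0..<L} \<rightarrow>\<^sub>E {0..<N})" and
    mult: "\<forall>a\<in>{0..<N ^ L}. \<forall>b\<in>{0..<N ^ L}. \<forall>i\<in>{0..<L}. h (a * b mod N ^ L) i = g (h a i) (h b i)"
    by blast
  interpret coordinatewise_mult_bij "N ^ L" L N h g
    by unfold_locales (use assms bij mult in auto)
  obtain p :: nat where p: "prime p" "p dvd N" using assms(1) prime_factor_nat[of N] by auto
  then have "p dvd N ^ L" using assms(2) by (simp add: prime_dvd_power_iff)
  then have "multiplicity p (\<Prod>(prime_factors (N ^ L))) = 1"
    using multiplicity_prod_prime_factors[of "N ^ L" p] assms(1) p(1) by simp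
  then have "\<not> L dvd multiplicity p (\<Prod>(prime_factors (N ^ L)))" using assms(2) by simp
  from power_mult_neq_power[OF p(1) this] card_coordinate_nilpotents assms(1) show False by simp
qed

end
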